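(* Let $(M,\phi,\xi,\eta,g)$ be a paracontact metric manifold and suppose $g$ is a $\delta$-almost Yamabe soliton, i.e. there are a smooth vector field $Z$, a smooth function $\lambda$ and a nowhere-vanishing smooth function $\delta$ on $M$ with $\frac{\delta}{2}\mathfrak{L}_Z g=(r-\lambda)g$, where $r$ is the scalar curvature of $g$. Then $$\eta(\mathfrak{L}_Z\xi)=\frac{\lambda-r}{\delta},\qquad (\mathfrak{L}_Z\eta)(\xi)=\frac{r-\lambda}{\delta}.$$
   Context: An almost paracontact structure on a smooth manifold $M$ is a triple $(\phi,\xi,\eta)$ of a $(1,1)$-tensor field $\phi$, a vector field $\xi$ (the Reeb vector field) and a 1-form $\eta$ with $\phi^2=I-\eta\otimes\xi$, $\eta(\xi)=1$, $\phi\xi=0$, $\eta\circ\phi=0$. A compatible pseudo-Riemannian metric $g$ satisfies $g(\phi X,\phi Y)=-g(X,Y)+\eta(X)\eta(Y)$ for all vector fields $X,Y$; then $\eta(X)=g(X,\xi)$. The structure $(\phi,\xi,\eta,g)$ is a paracontact metric structure if $d\eta=\Phi$, where $\Phi(X,Y)=g(X,\phi Y)$. $\mathfrak{L}_Z$ denotes the Lie derivative along $Z$. *)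

theory Defs
  imports "HOL-Analysis.Analysis"
begin

text \<open>Local-coordinate model: the manifold is (a chart domain) an open set
  U of real^'n. Vector fields are maps real^'n => real^'n, 1-forms are
  covector fields (eta(X) = eta p \<bullet> X), (1,1)-tensors and the metric
  are matrix-valued fields; g(u,v) = u \<bullet> (g p *v v).\<close>

fun Ck :: "nat \<Rightarrow> (real^'n) set \<Rightarrow> (real^'n \<Rightarrow> 'b::real_normed_vector) \<Rightarrow> bool" where
  "Ck 0 U f = continuous_on U f"
| "Ck (Suc k) U f = (f differentiable_on U \<and> continuous_on U f \<and>
      (\<forall>v. Ck k U (\<lambda>x. frechet_derivative f (at x) v)))"

definition smooth_on :: "(real^'n) set \<Rightarrow> (real^'n \<Rightarrow> 'b::real_normed_vector) \<Rightarrow> bool" where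
  "smooth_on U f = (\<forall>k. Ck k U f)"

definition dd :: "(real^'n \<Rightarrow> 'b::real_normed_vector) \<Rightarrow> real^'n \<Rightarrow> real^'n \<Rightarrow> 'b" where
  "dd f p v = frechet_derivative f (at p) v"

definition pd :: "'n::finite \<Rightarrow> (real^'n \<Rightarrow> 'b::real_normed_vector) \<Rightarrow> real^'n \<Rightarrow> 'b" where
  "pd i f p = dd f p (axis i 1)"

definition gform :: "(real^'n \<Rightarrow> real^'n^'n) \<Rightarrow> real^'n \<Rightarrow> real^'n \<Rightarrow> real^'n \<Rightarrow> real" where
  "gform g p u v = u \<bullet> (g p *v v)"

definition ginv :: "(real^'n \<Rightarrow> real^'n^'n) \<Rightarrow> real^'n \<Rightarrow> real^'n^'n" where
  "ginv g p = matrix_inv (g p)"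

definition christ :: "(real^'n::finite \<Rightarrow> real^'n^'n) \<Rightarrow> 'n \<Rightarrow> 'n \<Rightarrow> 'n \<Rightarrow> real^'n \<Rightarrow> real" where
  "christ g k i j p = (1/2) * (\<Sum>l\<in>UNIV. ginv g p $ k $ l *
      (pd i (\<lambda>q. g q $ j $ l) p + pd j (\<lambda>q. g q $ i $ l) p - pd l (\<lambda>q. g q $ i $ j) p))"

definition ricci :: "(real^'n::finite \<Rightarrow> real^'n^'n) \<Rightarrow> 'n \<Rightarrow> 'n \<Rightarrow> real^'n \<Rightarrow> real" where
  "ricci g i j p =
     (\<Sum>k\<in>UNIV. pd k (christ g k i j) p) - (\<Sum>k\<in>UNIV. pd j (christ g k i k) p)
   + (\<Sum>k\<in>UNIV. \<Sum>l\<in>UNIV. christ g k k l p * christ g l i j p)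
   - (\<Sum>k\<in>UNIV. \<Sum>l\<in>UNIV. christ g k j l p * christ g l i k p)"

definition scalar_curvature :: "(real^'n::finite \<Rightarrow> real^'n^'n) \<Rightarrow> real^'n \<Rightarrow> real" where
  "scalar_curvature g p = (\<Sum>i\<in>UNIV. \<Sum>j\<in>UNIV. ginv g p $ i $ j * ricci g i j p)"

definition lie_bracket :: "(real^'n \<Rightarrow> real^'n) \<Rightarrow> (real^'n \<Rightarrow> real^'n) \<Rightarrow> real^'n \<Rightarrow> real^'n" where
  "lie_bracket X Y p = dd Y p (X p) - dd X p (Y p)"

text \<open>(L_Z g)(u,v) at p for constant coordinate vectors u, v.\<close>
definition lie_metric :: "(real^'n \<Rightarrow> real^'n) \<Rightarrow> (real^'n \<Rightarrow> real^'n^'n) \<Rightarrow> real^'n \<Rightarrow> real^'n \<Rightarrow> real^'n \<Rightarrow> real" where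
  "lie_metric Z g p u v = u \<bullet> (dd g p (Z p) *v v) + gform g p (dd Z p u) v + gform g p u (dd Z p v)"

text \<open>(L_Z eta)(v) at p for a constant coordinate vector v.\<close>
definition lie_form :: "(real^'n \<Rightarrow> real^'n) \<Rightarrow> (real^'n \<Rightarrow> real^'n) \<Rightarrow> real^'n \<Rightarrow> real^'n \<Rightarrow> real" where
  "lie_form Z \<eta> p v = dd \<eta> p (Z p) \<bullet> v + \<eta> p \<bullet> dd Z p v"

text \<open>Exterior derivative, convention d eta(X,Y) = 1/2 (X eta(Y) - Y eta(X) - eta([X,Y])).\<close>
definition d_form :: "(real^'n \<Rightarrow> real^'n) \<Rightarrow> real^'n \<Rightarrow> real^'n \<Rightarrow> real^'n \<Rightarrow> real" where
  "d_form \<eta> p u v = (1/2) * (dd \<eta> p u \<bullet> v - dd \<eta> p v \<bullet> u)"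

definition paracontact_metric ::
  "(real^'n::finite) set \<Rightarrow> (real^'n \<Rightarrow> real^'n^'n) \<Rightarrow> (real^'n \<Rightarrow> real^'n) \<Rightarrow> (real^'n \<Rightarrow> real^'n)
   \<Rightarrow> (real^'n \<Rightarrow> real^'n^'n) \<Rightarrow> bool" where
  "paracontact_metric U \<phi> \<xi> \<eta> g \<longleftrightarrow>
     open U \<and> smooth_on U \<phi> \<and> smooth_on U \<xi> \<and> smooth_on U \<eta> \<and> smooth_on U g \<and>
     (\<forall>p\<in>U.
        \<comment> \<open>almost paracontact structure\<close>
        (\<forall>v. \<phi> p *v (\<phi> p *v v) = v - (\<eta> p \<bullet> v) *\<^sub>R \<xi> p) \<and>
        \<eta> p \<bullet> \<xi> p = 1 \<and> \<phi> p *v \<xi> p = 0 \<and> (\<forall>v. \<eta> p \<bullet> (\<phi> p *v v) = 0) \<and>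
        \<comment> \<open>pseudo-Riemannian metric\<close>
        transpose (g p) = g p \<and> invertible (g p) \<and>
        \<comment> \<open>compatibility\<close>
        (\<forall>u v. gform g p (\<phi> p *v u) (\<phi> p *v v) = - gform g p u v + (\<eta> p \<bullet> u) * (\<eta> p \<bullet> v)) \<and>
        \<comment> \<open>d eta = Phi, Phi(X,Y) = g(X, phi Y)\<close>
        (\<forall>u v. d_form \<eta> p u v = gform g p u (\<phi> p *v v)))"

end

theory Submission
  imports Defs
begin

text \<open>Both identities come from differentiating a constant along Z. Compatibility of g with
  \<phi> at \<xi> gives g(X,\<xi>) = \<eta>(X), so \<eta>(\<xi>) = 1 and g(\<xi>,\<xi>) = 1 on U. Hence
  (L_Z \<eta>)(\<xi>) = Z(\<eta>(\<xi>)) - \<eta>([Z,\<xi>]) = -\<eta>([Z,\<xi>]) and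
  (L_Z g)(\<xi>,\<xi>) = Z(g(\<xi>,\<xi>)) - 2 g([Z,\<xi>],\<xi>) = -2 \<eta>([Z,\<xi>]); evaluating the soliton
  equation at (\<xi>,\<xi>) then gives -\<delta> \<eta>([Z,\<xi>]) = r - \<lambda>.\<close>

lemma bounded_bilinear_matrix_vector_mult:
  "bounded_bilinear (\<lambda>(A::real^'n::finite^'m::finite) (x::real^'n). A *v x)"
proof (rule bounded_bilinear.intro)
  fix A B :: "real^'n^'m" and x y :: "real^'n" and r :: real
  show "(A + B) *v x = A *v x + B *v x" by (simp add: matrix_vector_mult_add_rdistrib)
  show "A *v (x + y) = A *v x + A *v y" by (simp add: matrix_vector_right_distrib)
  show "(r *\<^sub>R A) *v x = r *\<^sub>R (A *v x)"
    by (simp add: vec_eq_iff matrix_vector_mult_def sum_distrib_left mult.assoc)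
  show "A *v (r *\<^sub>R x) = r *\<^sub>R (A *v x)" by (simp add: matrix_vector_mult_scaleR)
next
  show "\<exists>K. \<forall>(A::real^'n^'m) x. norm (A *v x) \<le> norm A * norm x * K"
  proof (intro exI allI)
    fix A :: "real^'n^'m" and x :: "real^'n"
    have entry_le: "\<And>i j. \<bar>A $ i $ j\<bar> \<le> norm A"
      by (rule order_trans[OF component_le_norm_cart Finite_Cartesian_Product.norm_nth_le])
    have "norm (A *v x) \<le> onorm ((*v) A) * norm x"
      by (simp add: onorm matrix_vector_mul_linear linear_linear)
    also have "\<dots> \<le> (real CARD('m) * real CARD('n) * norm A) * norm x"
      by (intro mult_right_mono onorm_le_matrix_component entry_le) simp
    finally show "norm (A *v x) \<le> norm A * norm x * (real CARD('m) * real CARD('n))"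
      by (simp add: algebra_simps)
  qed
qed

lemma inner_matrix_vector_mult_symmetric:
  fixes A :: "real^'n::finite^'n"
  assumes "transpose A = A"
  shows "u \<bullet> (A *v v) = v \<bullet> (A *v u)"
  by (metis assms dot_lmul_matrix inner_commute transpose_matrix_vector)

lemma has_derivative_eq_0_if_constant_on_open:
  assumes "(f has_derivative f') (at p)" "open U" "p \<in> U" "\<forall>q\<in>U. f q = c"
  shows "f' v = 0"
proof -
  have "(f has_derivative (\<lambda>v. 0)) (at p)"
    by (rule has_derivative_transform_within_open[OF has_derivative_const, where s=U])
       (use assms in auto)
  with assms(1) have "f' = (\<lambda>v. 0)" by (rule has_derivative_unique)
  then show ?thesis by simp
qed

lemma has_derivative_dd:
  "f differentiable (at p) \<Longrightarrow> (f has_derivative dd f p) (at p)"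
  unfolding dd_def by (simp add: frechet_derivative_works[symmetric])

lemma smooth_on_differentiable_at:
  assumes "smooth_on U f" "open U" "p \<in> U"
  shows "f differentiable (at p)"
proof -
  have "Ck (Suc 0) U f" using assms(1) unfolding smooth_on_def by blast
  then have "f differentiable_on U" by simp
  with assms(2,3) show ?thesis by (metis at_within_open differentiable_on_def)
qed

lemma lie_form_if_pairing_constant:
  assumes "\<eta> differentiable (at p)" "\<xi> differentiable (at p)"
    and "open U" "p \<in> U" "\<forall>q\<in>U. \<eta> q \<bullet> \<xi> q = c"
  shows "lie_form Z \<eta> p (\<xi> p) = - (\<eta> p \<bullet> lie_bracket Z \<xi> p)"
proof -
  have "((\<lambda>q. \<eta> q \<bullet> \<xi> q) has_derivative (\<lambda>v. \<eta> p \<bullet> dd \<xi> p v + dd \<eta> p v \<bullet> \<xi> p)) (at p)"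
    using assms(1,2) by (intro has_derivative_inner has_derivative_dd)
  then have "\<eta> p \<bullet> dd \<xi> p (Z p) + dd \<eta> p (Z p) \<bullet> \<xi> p = 0"
    using assms(3-5) by (rule has_derivative_eq_0_if_constant_on_open)
  then show ?thesis
    by (simp add: lie_form_def lie_bracket_def inner_diff_right inner_commute)
qed

lemma lie_metric_diag_if_length_constant:
  assumes "g differentiable (at p)" "\<xi> differentiable (at p)" "transpose (g p) = g p"
    and "open U" "p \<in> U" "\<forall>q\<in>U. gform g q (\<xi> q) (\<xi> q) = c"
  shows "lie_metric Z g p (\<xi> p) (\<xi> p) = - 2 * gform g p (lie_bracket Z \<xi> p) (\<xi> p)"
proof -
  define a where "a = dd \<xi> p (Z p)"
  define b where "b = dd Z p (\<xi> p)"
  have sym: "\<And>u v. u \<bullet> (g p *v v) = v \<bullet> (g p *v u)"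
    using assms(3) by (rule inner_matrix_vector_mult_symmetric)
  have "((\<lambda>q. g q *v \<xi> q) has_derivative (\<lambda>v. g p *v dd \<xi> p v + dd g p v *v \<xi> p)) (at p)"
    using assms(1,2)
    by (intro bounded_bilinear.FDERIV[OF bounded_bilinear_matrix_vector_mult] has_derivative_dd)
  then have "((\<lambda>q. \<xi> q \<bullet> (g q *v \<xi> q)) has_derivative
      (\<lambda>v. \<xi> p \<bullet> (g p *v dd \<xi> p v + dd g p v *v \<xi> p) + dd \<xi> p v \<bullet> (g p *v \<xi> p))) (at p)"
    using assms(2) by (intro has_derivative_inner has_derivative_dd)
  moreover have "\<forall>q\<in>U. \<xi> q \<bullet> (g q *v \<xi> q) = c"
    using assms(6) by (simp add: gform_def)
  ultimately have "\<xi> p \<bullet> (g p *v a + dd g p (Z p) *v \<xi> p) + a \<bullet> (g p *v \<xi> p) = 0"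
    unfolding a_def by (rule has_derivative_eq_0_if_constant_on_open[OF _ assms(4,5)])
  then have dg: "\<xi> p \<bullet> (dd g p (Z p) *v \<xi> p) = - 2 * (a \<bullet> (g p *v \<xi> p))"
    using sym[of "\<xi> p" a] by (simp add: inner_add_right)
  have "lie_metric Z g p (\<xi> p) (\<xi> p) = - 2 * (a \<bullet> (g p *v \<xi> p)) + 2 * (b \<bullet> (g p *v \<xi> p))"
    unfolding lie_metric_def gform_def b_def[symmetric] using dg sym[of "\<xi> p" b] by simp
  also have "\<dots> = - 2 * gform g p (a - b) (\<xi> p)"
    by (simp add: gform_def inner_diff_left algebra_simps)
  moreover have "lie_bracket Z \<xi> p = a - b"
    by (simp add: lie_bracket_def a_def b_def)
  ultimately show ?thesis
    by simp
qed

lemma paracontact_metric_gform_xi: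
  assumes "paracontact_metric U \<phi> \<xi> \<eta> g" "p \<in> U"
  shows "gform g p u (\<xi> p) = \<eta> p \<bullet> u"
proof -
  have "\<eta> p \<bullet> \<xi> p = 1" "\<phi> p *v \<xi> p = 0"
    "gform g p (\<phi> p *v u) (\<phi> p *v \<xi> p) = - gform g p u (\<xi> p) + (\<eta> p \<bullet> u) * (\<eta> p \<bullet> \<xi> p)"
    using assms unfolding paracontact_metric_def by blast+
  then show ?thesis by (simp add: gform_def)
qed

theorem mainTheorem1:
  fixes U :: "(real^'n::finite) set"
    and \<phi> g :: "real^'n \<Rightarrow> real^'n^'n"
    and \<xi> \<eta> Z :: "real^'n \<Rightarrow> real^'n"
    and lam \<delta> :: "real^'n \<Rightarrow> real"
  assumes pc: "paracontact_metric U \<phi> \<xi> \<eta> g"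
    and smZ: "smooth_on U Z" and sml: "smooth_on U lam" and smd: "smooth_on U \<delta>"
    and dnz: "\<forall>p\<in>U. \<delta> p \<noteq> 0"
    and soliton: "\<forall>p\<in>U. \<forall>u v. \<delta> p / 2 * lie_metric Z g p u v
                     = (scalar_curvature g p - lam p) * gform g p u v"
  shows "\<forall>p\<in>U. \<eta> p \<bullet> lie_bracket Z \<xi> p = (lam p - scalar_curvature g p) / \<delta> p
              \<and> lie_form Z \<eta> p (\<xi> p) = (scalar_curvature g p - lam p) / \<delta> p"
proof
  \<comment> \<open>Only \<eta>, \<xi> and g are differentiated.\<close>
  fix p assume p: "p \<in> U"
  have reg: "open U" "smooth_on U \<xi>" "smooth_on U \<eta>" "smooth_on U g" "transpose (g p) = g p"
    and eta_xi: "\<forall>q\<in>U. \<eta> q \<bullet> \<xi> q = 1"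
    using pc p unfolding paracontact_metric_def by auto
  have g_xi_xi: "\<forall>q\<in>U. gform g q (\<xi> q) (\<xi> q) = 1"
    using eta_xi paracontact_metric_gform_xi[OF pc] by (simp add: inner_commute)
  note diff = smooth_on_differentiable_at[OF _ reg(1) p]
  have lie_form: "lie_form Z \<eta> p (\<xi> p) = - (\<eta> p \<bullet> lie_bracket Z \<xi> p)"
    using diff[OF reg(3)] diff[OF reg(2)] reg(1) p eta_xi by (rule lie_form_if_pairing_constant)
  have "lie_metric Z g p (\<xi> p) (\<xi> p) = - 2 * gform g p (lie_bracket Z \<xi> p) (\<xi> p)"
    using diff[OF reg(4)] diff[OF reg(2)] reg(5) reg(1) p g_xi_xi by (rule lie_metric_diag_if_length_constant)
  moreover have "\<delta> p / 2 * lie_metric Z g p (\<xi> p) (\<xi> p) = scalar_curvature g p - lam p"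
    using soliton p g_xi_xi by simp
  ultimately have "- \<delta> p * (\<eta> p \<bullet> lie_bracket Z \<xi> p) = scalar_curvature g p - lam p"
    by (simp add: paracontact_metric_gform_xi[OF pc p])
  then have "\<eta> p \<bullet> lie_bracket Z \<xi> p = (lam p - scalar_curvature g p) / \<delta> p"
    using dnz p by (simp add: field_simps)
  with lie_form show "\<eta> p \<bullet> lie_bracket Z \<xi> p = (lam p - scalar_curvature g p) / \<delta> p
              \<and> lie_form Z \<eta> p (\<xi> p) = (scalar_curvature g p - lam p) / \<delta> p"
    by (metis minus_diff_eq minus_divide_left)
qed

end
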